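(* In any symmetric $2\times 2$ game (a symmetric two-player game $(X,\pi)$ with $|X|=2$), imitation is essentially unbeatable.
   Context: $\pi:X\times X\to\mathbb{R}$, $\pi(x,y)$ = payoff of the player choosing $x$ against $y$. Relative payoff: $\Delta(x,y)=\pi(x,y)-\pi(y,x)$, and $\hat\Delta:=\max_{x,y\in X}\Delta(x,y)$. Imitate-the-best: given initial $y_0\in X$ and any opponent sequence $(x_t)_{t\ge0}$ in $X$, $y_t=x_{t-1}$ if $\Delta(x_{t-1},y_{t-1})>0$ and $y_t=y_{t-1}$ otherwise. Imitation is essentially unbeatable if for every $y_0\in X$ and every sequence $(x_t)$, $\limsup_{T\to\infty}\sum_{t=0}^T\Delta(x_t,y_t)\le\hat\Delta$. *)

theory Defs
  imports "HOL-Analysis.Analysis"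
begin

text \<open>A symmetric two-player game on the strategy set X = UNIV :: 'a set with payoff
  function pi, where pi x y is the payoff of the player choosing x against y.\<close>

definition rel_payoff :: "('a \<Rightarrow> 'a \<Rightarrow> real) \<Rightarrow> 'a \<Rightarrow> 'a \<Rightarrow> real" where
  "rel_payoff \<pi> x y = \<pi> x y - \<pi> y x"

definition max_rel_payoff :: "('a::finite \<Rightarrow> 'a \<Rightarrow> real) \<Rightarrow> real" where
  "max_rel_payoff \<pi> = Max {rel_payoff \<pi> x y | x y. True}"

primrec imitate :: "('a \<Rightarrow> 'a \<Rightarrow> real) \<Rightarrow> 'a \<Rightarrow> (nat \<Rightarrow> 'a) \<Rightarrow> nat \<Rightarrow> 'a" where
  "imitate \<pi> y0 xs 0 = y0"
| "imitate \<pi> y0 xs (Suc t) =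
     (if rel_payoff \<pi> (xs t) (imitate \<pi> y0 xs t) > 0 then xs t else imitate \<pi> y0 xs t)"

definition imitation_essentially_unbeatable :: "('a::finite \<Rightarrow> 'a \<Rightarrow> real) \<Rightarrow> bool" where
  "imitation_essentially_unbeatable \<pi> \<longleftrightarrow>
     (\<forall>y0 xs. limsup (\<lambda>T. ereal (\<Sum>t\<le>T. rel_payoff \<pi> (xs t) (imitate \<pi> y0 xs t)))
                \<le> ereal (max_rel_payoff \<pi>))"

end

theory Submission
  imports Defs
begin

text \<open>With only two strategies, a strategy that has just beaten another one cannot be beaten
  itself: the only candidate left is the loser, and relative payoffs are antisymmetric. Hence
  the imitator's cumulative loss is bounded by a potential that is \<open>0\<close> while it plays a
  beatable strategy and the maximal relative payoff otherwise: each loss moves it from a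
  beatable strategy to an unbeatable one, and it cannot lose again before switching back,
  which costs nothing.\<close>

definition beatable :: "('a \<Rightarrow> 'a \<Rightarrow> real) \<Rightarrow> 'a \<Rightarrow> bool" where
  "beatable \<pi> y \<longleftrightarrow> (\<exists>x. rel_payoff \<pi> x y > 0)"

lemma rel_payoff_le_max_rel_payoff:
  fixes \<pi> :: "'a::finite \<Rightarrow> 'a \<Rightarrow> real"
  shows "rel_payoff \<pi> x y \<le> max_rel_payoff \<pi>"
proof -
  have "{rel_payoff \<pi> x y | x y. True} = case_prod (rel_payoff \<pi>) ` UNIV"
    by auto
  then show ?thesis
    unfolding max_rel_payoff_def by (intro Max_ge) auto
qed

lemma max_rel_payoff_nonneg:
  fixes \<pi> :: "'a::finite \<Rightarrow> 'a \<Rightarrow> real"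
  shows "0 \<le> max_rel_payoff \<pi>"
  using rel_payoff_le_max_rel_payoff[of \<pi> x x] by (simp add: rel_payoff_def)

lemma winner_not_beatable_if_card_2:
  fixes \<pi> :: "'a::finite \<Rightarrow> 'a \<Rightarrow> real"
  assumes "CARD('a) = 2" and win: "rel_payoff \<pi> x y > 0"
  shows "\<not> beatable \<pi> x"
proof
  assume "beatable \<pi> x"
  then obtain z where z: "rel_payoff \<pi> z x > 0"
    unfolding beatable_def by blast
  have "z \<noteq> x" "x \<noteq> y" "z \<noteq> y"
    using win z by (auto simp: rel_payoff_def)
  then have "card {x, y, z} = 3"
    by auto
  moreover have "card {x, y, z} \<le> CARD('a)"
    by (rule card_mono) auto
  ultimately show False
    using assms(1) by simp
qed

lemma sum_rel_payoff_imitate_le_potential: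
  fixes \<pi> :: "'a::finite \<Rightarrow> 'a \<Rightarrow> real"
  assumes winners_unbeatable: "\<And>x y. rel_payoff \<pi> x y > 0 \<Longrightarrow> \<not> beatable \<pi> x"
  shows "(\<Sum>t<T. rel_payoff \<pi> (xs t) (imitate \<pi> y0 xs t))
           \<le> (if beatable \<pi> (imitate \<pi> y0 xs T) then 0 else max_rel_payoff \<pi>)"
proof (induction T)
  case 0
  show ?case
    using max_rel_payoff_nonneg[of \<pi>] by simp
next
  case (Suc T)
  let ?y = "imitate \<pi> y0 xs T"
  show ?case
  proof (cases "rel_payoff \<pi> (xs T) ?y > 0")
    case True
    then have "beatable \<pi> ?y" "\<not> beatable \<pi> (xs T)"
      using winners_unbeatable unfolding beatable_def by blast+
    then show ?thesis
      using Suc.IH True rel_payoff_le_max_rel_payoff[of \<pi> "xs T" ?y] by simp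
  next
    case False
    then show ?thesis
      using Suc.IH by simp
  qed
qed

lemma sum_rel_payoff_imitate_le_max:
  fixes \<pi> :: "'a::finite \<Rightarrow> 'a \<Rightarrow> real"
  assumes "\<And>x y. rel_payoff \<pi> x y > 0 \<Longrightarrow> \<not> beatable \<pi> x"
  shows "(\<Sum>t\<le>T. rel_payoff \<pi> (xs t) (imitate \<pi> y0 xs t)) \<le> max_rel_payoff \<pi>"
proof -
  have "(\<Sum>t<Suc T. rel_payoff \<pi> (xs t) (imitate \<pi> y0 xs t))
          \<le> (if beatable \<pi> (imitate \<pi> y0 xs (Suc T)) then 0 else max_rel_payoff \<pi>)"
    by (rule sum_rel_payoff_imitate_le_potential) (use assms in blast)
  then show ?thesis
    using max_rel_payoff_nonneg[of \<pi>]
    by (simp add: lessThan_Suc_atMost split: if_splits)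
qed

theorem proposition2:
  fixes \<pi> :: "'a::finite \<Rightarrow> 'a \<Rightarrow> real"
  assumes "CARD('a) = 2"
  shows "imitation_essentially_unbeatable \<pi>"
  unfolding imitation_essentially_unbeatable_def
proof (intro allI)
  fix y0 xs
  have "ereal (\<Sum>t\<le>T. rel_payoff \<pi> (xs t) (imitate \<pi> y0 xs t)) \<le> ereal (max_rel_payoff \<pi>)"
    for T
    using sum_rel_payoff_imitate_le_max[OF winner_not_beatable_if_card_2[OF assms]] by simp
  then show "limsup (\<lambda>T. ereal (\<Sum>t\<le>T. rel_payoff \<pi> (xs t) (imitate \<pi> y0 xs t)))
               \<le> ereal (max_rel_payoff \<pi>)"
    by (intro Limsup_bounded) auto
qed

end
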